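(* Let $\beta_n,\beta_d$ be coprime positive integers with $\beta_n>\beta_d$, put $\beta=\beta_n/\beta_d$, let $\zeta\geq 1$ be an integer and let $\epsilon_s\in(0,1)$. Consider the time-homogeneous Markov chain on the finite state space $\mathcal{S}=\{k/\beta_d : k=0,1,\dots,\beta_n(\zeta+1)\}$ with the following transition probabilities from a state $x\in\mathcal{S}$: (i) if $x\le 1$ ("idle" state): go to $\beta$ with probability $\epsilon_s$ and to $0$ with probability $1-\epsilon_s$; (ii) if $1<x\le \beta\zeta+1$ ("safe" state): go to $x+\beta-1$ with probability $\epsilon_s$ and to $x-1$ with probability $1-\epsilon_s$; (iii) if $x>\beta\zeta+1$ ("hazard" state): go to $x-1$ with probability $1$. Then this Markov chain is irreducible (every state is reachable from every state) and aperiodic.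
   Context: This chain models a two-staged adaptive successive cancellation list decoder: a fast decoder decodes each incoming codeword in time $t_s$ and fails independently with probability $\epsilon_s$; failed codewords are stored in a buffer of capacity $\zeta$ codewords and re-decoded by a slow decoder needing time $\beta t_s$. The state $x=\beta i_\zeta+i_\beta$ is the total remaining time (in units of $t_s$) needed to clear the buffer, where $i_\zeta\in\{0,\dots,\zeta\}$ is the number of buffered codewords and $i_\beta\in\{i/\beta_d: 0\le i\le \beta_n\}$ is the remaining decoding time of the slow decoder; one step of the chain corresponds to time $t_s$. The transition rules above are the paper's definition of the model. *)

theory Defs
  imports Complex_Main
begin

definition states :: "nat \<Rightarrow> nat \<Rightarrow> nat \<Rightarrow> real set" where
  "states bn bd z = (\<lambda>k. real k / real bd) ` {0..bn * (z + 1)}"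

definition trans_prob :: "nat \<Rightarrow> nat \<Rightarrow> nat \<Rightarrow> real \<Rightarrow> real \<Rightarrow> real \<Rightarrow> real" where
  "trans_prob bn bd z e x y =
     (let \<beta> = real bn / real bd in
      if x \<le> 1 then
        (if y = \<beta> then e else 0) + (if y = 0 then 1 - e else 0)
      else if x \<le> \<beta> * real z + 1 then
        (if y = x + \<beta> - 1 then e else 0) + (if y = x - 1 then 1 - e else 0)
      else (if y = x - 1 then 1 else 0))"

fun nstep_prob :: "nat \<Rightarrow> nat \<Rightarrow> nat \<Rightarrow> real \<Rightarrow> nat \<Rightarrow> real \<Rightarrow> real \<Rightarrow> real" where
  "nstep_prob bn bd z e 0 x y = (if x = y then 1 else 0)"
| "nstep_prob bn bd z e (Suc n) x y =
     (\<Sum>w\<in>states bn bd z. trans_prob bn bd z e x w * nstep_prob bn bd z e n w y)"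

definition irreducible_chain :: "nat \<Rightarrow> nat \<Rightarrow> nat \<Rightarrow> real \<Rightarrow> bool" where
  "irreducible_chain bn bd z e \<longleftrightarrow>
     (\<forall>x\<in>states bn bd z. \<forall>y\<in>states bn bd z. \<exists>n. nstep_prob bn bd z e n x y > 0)"

definition period :: "nat \<Rightarrow> nat \<Rightarrow> nat \<Rightarrow> real \<Rightarrow> real \<Rightarrow> nat" where
  "period bn bd z e x = Gcd {n. 0 < n \<and> nstep_prob bn bd z e n x x > 0}"

definition aperiodic_chain :: "nat \<Rightarrow> nat \<Rightarrow> nat \<Rightarrow> real \<Rightarrow> bool" where
  "aperiodic_chain bn bd z e \<longleftrightarrow> (\<forall>x\<in>states bn bd z. period bn bd z e x = 1)"

end

theory Submission
  imports Defs "HOL-Number_Theory.Cong"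
begin

text \<open>
Measure states in units of \<open>1/\<beta>\<^sub>d\<close>, so that state \<open>k/\<beta>\<^sub>d\<close> becomes the integer \<open>k \<le> \<beta>\<^sub>n(\<zeta>+1)\<close>.
From every \<open>k \<ge> \<beta>\<^sub>d\<close> the chain can move down to \<open>k - \<beta>\<^sub>d\<close>, and if moreover
\<open>k \<le> \<beta>\<^sub>n\<zeta> + \<beta>\<^sub>d\<close> up to \<open>k + \<beta>\<^sub>n - \<beta>\<^sub>d\<close>. Going down reaches \<open>0\<close> from everywhere.
Conversely, a descent to the residue representative in \<open>[\<beta>\<^sub>d, 2\<beta>\<^sub>d)\<close> followed by one up
move shifts the residue class mod \<open>\<beta>\<^sub>d\<close> by \<open>\<beta>\<^sub>n\<close> and lands in the window \<open>[\<beta>\<^sub>n, \<beta>\<^sub>n+\<beta>\<^sub>d)\<close>;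
since \<open>\<beta>\<^sub>n\<close> generates \<open>\<int>/\<beta>\<^sub>d\<close>, all of the window, hence everything below it, is reachable
from \<open>0\<close>, and the states above it are reached by up moves. Aperiodicity follows from the
self-loop at the idle state \<open>0\<close>.
\<close>

definition chain_edge :: "nat \<Rightarrow> nat \<Rightarrow> nat \<Rightarrow> real \<Rightarrow> real \<Rightarrow> real \<Rightarrow> bool" where
  "chain_edge bn bd z e x y \<longleftrightarrow> y \<in> states bn bd z \<and> 0 < trans_prob bn bd z e x y"

lemma trans_prob_nonneg: "0 \<le> e \<Longrightarrow> e \<le> 1 \<Longrightarrow> 0 \<le> trans_prob bn bd z e x y"
  by (auto simp: trans_prob_def Let_def)

lemma nstep_prob_nonneg: "0 \<le> e \<Longrightarrow> e \<le> 1 \<Longrightarrow> 0 \<le> nstep_prob bn bd z e n x y"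
  by (induction n arbitrary: x) (auto intro!: sum_nonneg mult_nonneg_nonneg trans_prob_nonneg)

lemma nstep_prob_pos_iff_relpowp:
  assumes "0 \<le> e" "e \<le> 1"
  shows "0 < nstep_prob bn bd z e n x y \<longleftrightarrow> (chain_edge bn bd z e ^^ n) x y"
proof (induction n arbitrary: x)
  case 0
  show ?case by simp
next
  case (Suc n)
  let ?f = "\<lambda>w. trans_prob bn bd z e x w * nstep_prob bn bd z e n w y"
  have nonneg: "0 \<le> ?f w" for w
    using assms by (intro mult_nonneg_nonneg trans_prob_nonneg nstep_prob_nonneg)
  have fin: "finite (states bn bd z)"
    by (simp add: states_def)
  have "0 < sum ?f (states bn bd z) \<longleftrightarrow> sum ?f (states bn bd z) \<noteq> 0"
    using sum_nonneg[of _ ?f] nonneg by (simp add: order_less_le)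
  also have "\<dots> \<longleftrightarrow> (\<exists>w\<in>states bn bd z. ?f w \<noteq> 0)"
    using sum_nonneg_eq_0_iff[OF fin, of ?f] nonneg by blast
  also have "\<dots> \<longleftrightarrow> (\<exists>w\<in>states bn bd z. 0 < trans_prob bn bd z e x w \<and>
      0 < nstep_prob bn bd z e n w y)"
    using assms by (simp add: order_less_le trans_prob_nonneg nstep_prob_nonneg)
  also have "\<dots> \<longleftrightarrow> (\<exists>w. chain_edge bn bd z e x w \<and> (chain_edge bn bd z e ^^ n) w y)"
    by (simp add: Suc.IH chain_edge_def[of bn bd z e x] Bex_def conj_ac)
  finally show ?case
    by (simp only: nstep_prob.simps relpowp_Suc_left OO_def)
qed

lemma Gcd_return_times_eq_1:
  assumes "R\<^sup>*\<^sup>* x y" "R\<^sup>*\<^sup>* y x" "R y y"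
  shows "Gcd {n. 0 < n \<and> (R ^^ n) x x} = 1"
proof -
  obtain m n where "(R ^^ m) x y" "(R ^^ n) y x"
    using assms(1,2) by (auto simp: rtranclp_power)
  moreover have "(R ^^ k) y y" for k
    using assms(3) by (induction k) auto
  ultimately have "(R ^^ (m + k + n)) x x" for k
    by (auto simp: relpowp_add)
  then have "Gcd {n. 0 < n \<and> (R ^^ n) x x} dvd m + k + n" if "0 < k" for k
    using that by (intro Gcd_dvd) auto
  from this[of 1] this[of 2] have "Gcd {n. 0 < n \<and> (R ^^ n) x x} dvd (m + 2 + n) - (m + 1 + n)"
    by (intro dvd_diff_nat) auto
  then show ?thesis
    by simp
qed

lemma trans_prob_idle_pos:
  assumes "x \<le> 1" "0 < e" "e < 1" "y = real bn / real bd \<or> y = 0"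
  shows "0 < trans_prob bn bd z e x y"
  using assms by (auto simp: trans_prob_def Let_def)

lemma trans_prob_down_pos:
  assumes "1 < x" "0 \<le> e" "e < 1"
  shows "0 < trans_prob bn bd z e x (x - 1)"
  using assms by (auto simp: trans_prob_def Let_def)

lemma trans_prob_up_pos:
  assumes "1 < x" "x \<le> real bn / real bd * real z + 1" "0 < e" "e \<le> 1"
  shows "0 < trans_prob bn bd z e x (x + real bn / real bd - 1)"
  using assms by (auto simp: trans_prob_def Let_def)

locale two_stage_chain =
  fixes bn bd z :: nat and e :: real
  assumes bd_pos: "0 < bd" and bd_less_bn: "bd < bn" and coprime_bn_bd: "coprime bn bd"
    and z_ge_1: "1 \<le> z" and e_pos: "0 < e" and e_less_1: "e < 1"
begin

abbreviation edge :: "real \<Rightarrow> real \<Rightarrow> bool" where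
  "edge \<equiv> chain_edge bn bd z e"

definition state :: "nat \<Rightarrow> real" where
  "state k = real k / real bd"

lemma states_eq: "states bn bd z = state ` {..bn * (z + 1)}"
  by (auto simp: states_def state_def)

lemma state_0 [simp]: "state 0 = 0"
  by (simp add: state_def)

lemma state_le_1_iff: "state k \<le> 1 \<longleftrightarrow> k \<le> bd"
  using bd_pos by (simp add: state_def divide_le_eq)

lemma state_safe_iff: "state k \<le> real bn / real bd * real z + 1 \<longleftrightarrow> k \<le> bn * z + bd"
proof -
  have "state k \<le> real bn / real bd * real z + 1 \<longleftrightarrow> real k \<le> real bn * real z + real bd"
    using bd_pos by (simp add: state_def field_simps)
  also have "\<dots> \<longleftrightarrow> k \<le> bn * z + bd"
    by (simp flip: of_nat_mult of_nat_add)
  finally show ?thesis .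
qed

lemma state_diff_bd: "bd \<le> k \<Longrightarrow> state (k - bd) = state k - 1"
  using bd_pos by (simp add: state_def of_nat_diff field_simps)

lemma state_add_diff: "bd \<le> k \<Longrightarrow> state (k + bn - bd) = state k + real bn / real bd - 1"
  using bd_pos by (simp add: state_def of_nat_diff field_simps)

lemma bd_le_bn_z: "bd \<le> bn * z"
  using bd_less_bn z_ge_1 by (metis less_imp_le mult.right_neutral mult_le_mono2 order_trans)

lemma state_in_states: "k \<le> bn * (z + 1) \<Longrightarrow> state k \<in> states bn bd z"
  by (simp add: states_eq)

lemma edge_idle_zero: "k \<le> bd \<Longrightarrow> edge (state k) 0"
  using e_pos e_less_1 state_in_states[of 0]
  by (auto simp: chain_edge_def state_le_1_iff intro!: trans_prob_idle_pos)

lemma edge_idle_beta: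
  assumes "k \<le> bd"
  shows "edge (state k) (state bn)"
proof -
  have "state bn = real bn / real bd"
    by (simp add: state_def)
  then show ?thesis
    using assms e_pos e_less_1 state_in_states[of bn] state_le_1_iff[of k]
    by (simp add: chain_edge_def trans_prob_idle_pos)
qed

lemma edge_down:
  assumes "bd \<le> k" "k \<le> bn * (z + 1)"
  shows "edge (state k) (state (k - bd))"
proof (cases "k = bd")
  case True
  then show ?thesis using edge_idle_zero by simp
next
  case False
  with assms(1) have "1 < state k"
    using state_le_1_iff[of k] by simp
  then show ?thesis
    using assms e_pos e_less_1 state_in_states[of "k - bd"]
    by (simp add: chain_edge_def state_diff_bd trans_prob_down_pos)
qed

lemma edge_up:
  assumes "bd \<le> k" "k \<le> bn * z + bd"
  shows "edge (state k) (state (k + bn - bd))"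
proof (cases "k = bd")
  case True
  then show ?thesis using edge_idle_beta by simp
next
  case False
  with assms(1) have "1 < state k"
    using state_le_1_iff[of k] by simp
  moreover have "state k \<le> real bn / real bd * real z + 1"
    using assms(2) state_safe_iff by simp
  moreover have "k + bn - bd \<le> bn * (z + 1)"
    using assms(2) by simp
  ultimately show ?thesis
    using assms(1) e_pos e_less_1 state_in_states[of "k + bn - bd"]
    by (simp add: chain_edge_def state_add_diff trans_prob_up_pos)
qed

lemma reaches_down: "t + j * bd \<le> bn * (z + 1) \<Longrightarrow> edge\<^sup>*\<^sup>* (state (t + j * bd)) (state t)"
proof (induction j)
  case 0
  show ?case by simp
next
  case (Suc j)
  have "edge (state (t + Suc j * bd)) (state (t + j * bd))"
    using edge_down[of "t + Suc j * bd"] Suc.prems by simp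
  with Suc show ?case by simp
qed

lemma reaches_zero: "k \<le> bn * (z + 1) \<Longrightarrow> edge\<^sup>*\<^sup>* (state k) 0"
  using reaches_down[of "k mod bd" "k div bd"] edge_idle_zero[of "k mod bd"] bd_pos
  by (simp add: rtranclp.rtrancl_into_rtrancl)

lemma reaches_shift:
  assumes "bd \<le> s" "s \<le> bn * (z + 1)"
  shows "edge\<^sup>*\<^sup>* (state s) (state (bn + s mod bd))"
proof -
  define q where "q = bd + s mod bd"
  have s_eq: "s = q + (s div bd - 1) * bd"
  proof -
    have "0 < s div bd"
      using assms(1) bd_pos by (simp add: div_greater_zero_iff)
    then have "s div bd * bd = (s div bd - 1) * bd + bd"
      by (simp add: diff_mult_distrib)
    then show ?thesis
      unfolding q_def by (metis add.assoc add.commute div_mult_mod_eq)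
  qed
  have "edge\<^sup>*\<^sup>* (state s) (state q)"
    using reaches_down[of q "s div bd - 1"] s_eq assms(2) by simp
  moreover have "edge (state q) (state (q + bn - bd))"
    using edge_up[of q] bd_le_bn_z mod_less_divisor[OF bd_pos, of s] unfolding q_def by simp
  moreover have "q + bn - bd = bn + s mod bd"
    unfolding q_def using bd_less_bn by simp
  ultimately show ?thesis by simp
qed

lemma reaches_window_multiple: "edge\<^sup>*\<^sup>* 0 (state (bn + (i * bn) mod bd))"
proof (induction i)
  case 0
  show ?case using edge_idle_beta[of 0] by simp
next
  case (Suc i)
  have "bn + (i * bn) mod bd \<le> bn * (z + 1)"
    using bd_le_bn_z mod_less_divisor[OF bd_pos, of "i * bn"] by simp
  then have "edge\<^sup>*\<^sup>* (state (bn + (i * bn) mod bd)) (state (bn + (bn + (i * bn) mod bd) mod bd))"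
    using bd_less_bn by (intro reaches_shift) auto
  moreover have "(bn + (i * bn) mod bd) mod bd = (Suc i * bn) mod bd"
    by (simp add: mod_add_right_eq)
  ultimately show ?case
    using Suc.IH by simp
qed

lemma reaches_window:
  assumes "r < bd"
  shows "edge\<^sup>*\<^sup>* 0 (state (bn + r))"
proof -
  obtain x where "[bn * x = 1] (mod bd)"
    using cong_solve_coprime_nat[OF coprime_bn_bd] by auto
  then have "[x * r * bn = r] (mod bd)"
    using cong_scalar_right[of "bn * x" 1 bd r] by (simp add: ac_simps)
  then have "(x * r * bn) mod bd = r"
    using assms by (simp add: cong_def)
  then show ?thesis
    using reaches_window_multiple[of "x * r"] by simp
qed

lemma reaches_below_window: "t < bn + bd \<Longrightarrow> edge\<^sup>*\<^sup>* 0 (state t)"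
proof (induction "bn + bd - t" arbitrary: t rule: less_induct)
  case less
  show ?case
  proof (cases "bn \<le> t")
    case True
    then show ?thesis
      using reaches_window[of "t - bn"] less.prems by simp
  next
    case False
    then have "edge\<^sup>*\<^sup>* 0 (state (t + bd))"
      using less.hyps[of "t + bd"] bd_pos by simp
    moreover have "edge (state (t + bd)) (state t)"
      using edge_down[of "t + bd"] False bd_le_bn_z by simp
    ultimately show ?thesis by simp
  qed
qed

lemma reaches_from_zero: "t \<le> bn * (z + 1) \<Longrightarrow> edge\<^sup>*\<^sup>* 0 (state t)"
proof (induction t rule: less_induct)
  case (less t)
  show ?case
  proof (cases "t < bn + bd")
    case True
    then show ?thesis by (rule reaches_below_window)
  next
    case False
    define p where "p = t + bd - bn"
    have "p < t" "bd \<le> p" "p \<le> bn * z + bd"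
      using False bd_less_bn less.prems unfolding p_def by auto
    then have "edge\<^sup>*\<^sup>* 0 (state p)" and "edge (state p) (state (p + bn - bd))"
      using less by (auto intro: edge_up)
    moreover have "p + bn - bd = t"
      using False unfolding p_def by simp
    ultimately show ?thesis by simp
  qed
qed

lemma reaches_all: "x \<in> states bn bd z \<Longrightarrow> y \<in> states bn bd z \<Longrightarrow> edge\<^sup>*\<^sup>* x y"
  using reaches_zero reaches_from_zero by (auto simp: states_eq intro: rtranclp_trans)

end

theorem proposition2:
  fixes bn bd z :: nat and e :: real
  assumes "0 < bd" and "bd < bn" and "coprime bn bd"
    and "1 \<le> z"
    and "0 < e" and "e < 1"
  shows "irreducible_chain bn bd z e \<and> aperiodic_chain bn bd z e"
proof -
  interpret two_stage_chain bn bd z e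
    using assms by unfold_locales
  have pos_iff: "0 < nstep_prob bn bd z e n x y \<longleftrightarrow> (edge ^^ n) x y" for n x y
    using assms by (intro nstep_prob_pos_iff_relpowp) auto
  have "irreducible_chain bn bd z e"
    using reaches_all by (simp add: irreducible_chain_def pos_iff flip: rtranclp_power)
  moreover have "aperiodic_chain bn bd z e"
    unfolding aperiodic_chain_def period_def pos_iff
  proof
    fix x
    assume "x \<in> states bn bd z"
    with reaches_all have "edge\<^sup>*\<^sup>* x 0" and "edge\<^sup>*\<^sup>* 0 x"
      using state_in_states[of 0] by auto
    with edge_idle_zero[of 0] show "Gcd {n. 0 < n \<and> (edge ^^ n) x x} = 1"
      by (intro Gcd_return_times_eq_1) auto
  qed
  ultimately show ?thesis ..
qed

end
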